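(* Let $M,N\ge3$ be integers with $M$ divisible by $(7^{N+1})!$. For $1\le k\le N$ let $I_k$ be the sequence consisting of $N-k+1$ batches of $M$ identical items each, where the batches have item sizes $\frac1{7^N},\frac1{7^{N-1}},\dots,\frac1{7^k}$ in this order. Then $\mathrm{OPT}(I_k)\le\frac{7M}{6(7^k+1)}$ for every $1\le k\le N$.
   Context: Ordered Open End Bin Packing: a sequence of items with sizes in $(0,1]$ must be packed into bins in sequence order, where an item may be added to a bin only if the bin's current total size is strictly below $1$; equivalently, in each bin the total size of all items except the one appearing last in the sequence is strictly below $1$. $\mathrm{OPT}(I)$ is the minimum number of bins of such a packing of the sequence $I$. *)

theory Defs
  imports Complex_Main
begin

text \<open>A packing assigns to each item index i < length xs a bin label f i.
  Items are packed in sequence order; item i may be added to bin f i only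
  if the total size of the items preceding it (in the sequence) in that bin
  is strictly below 1.\<close>

definition oe_packing :: "real list \<Rightarrow> (nat \<Rightarrow> nat) \<Rightarrow> bool" where
  "oe_packing xs f \<longleftrightarrow>
     (\<forall>i < length xs. (\<Sum>j \<in> {j. j < i \<and> f j = f i}. xs ! j) < 1)"

definition OPT :: "real list \<Rightarrow> nat" where
  "OPT xs = (LEAST m. \<exists>f. oe_packing xs f \<and> (\<forall>i < length xs. f i < m))"

definition inst :: "nat \<Rightarrow> nat \<Rightarrow> nat \<Rightarrow> real list" where
  "inst N M k = concat (map (\<lambda>j. replicate M (1 / 7 ^ (N - j))) [0..<N - k + 1])"

end

theory Submission
  imports Defs
begin

(* In units of 7^-N the items of batch t = 0, ..., L (where L = N - k) weigh 7^t, and a bin is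
   admissible when its items other than the last one weigh less than 7^N = 7 K 7^L, K = 7^(k-1).
   Cut every batch into blocks of 6 (7^k + 1) = 42 K + 6 consecutive items and send block G of
   every batch to the seven bins 7G, ..., 7G + 6: each of the first six receives 6K items from every
   batch but the last and 6K + 1 items from the last batch, the seventh receives the remaining
   6K + 6 and 6K items. Since 6 (1 + 7 + ... + 7^(L-1)) = 7^L - 1, the items of a bin other than its
   last one weigh 7 K 7^L - K, resp. 7 K 7^L - K - 1. This packing uses 7M / (6 (7^k + 1)) bins. *)

lemma OPT_le:
  assumes "oe_packing xs f" and "\<forall>i < length xs. f i < m"
  shows "OPT xs \<le> m"
  unfolding OPT_def using assms by (blast intro: Least_le)

lemma concat_map_replicate_upt:
  "concat (map (\<lambda>j. replicate M (h j)) [0..<n]) = map (\<lambda>i. h (i div M)) [0..<n * M]"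
proof (cases "M = 0")
  case False
  show ?thesis
  proof (induction n)
    case (Suc n)
    have "[0..<Suc n * M] = [0..<n * M] @ [n * M..<n * M + M]"
      by (metis add.commute mult_Suc upt_add_eq_append zero_le)
    moreover have "map (\<lambda>i. h (i div M)) [n * M..<n * M + M] = replicate M (h n)"
      by (rule nth_equalityI) (use False in auto)
    ultimately show ?case using Suc by simp
  qed simp
qed simp

lemma inst_eq_map:
  "inst N M k = map (\<lambda>i. 7 ^ (i div M) / 7 ^ N) [0..<(N - k + 1) * M]"
proof -
  have "1 / 7 ^ (N - j) = (7::real) ^ j / 7 ^ N" if "j < N - k + 1" for j
    using that by (simp add: power_diff)
  then show ?thesis
    unfolding inst_def concat_map_replicate_upt
    by (intro map_cong refl) (simp add: less_mult_imp_div_less)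
qed

lemma oe_packing_of_nat_weights:
  fixes w :: "nat \<Rightarrow> nat"
  assumes "\<forall>i < n. (\<Sum>j | j < i \<and> f j = f i. w j) < D"
  shows "oe_packing (map (\<lambda>i. real (w i) / real D) [0..<n]) f"
  unfolding oe_packing_def
proof (intro allI impI)
  fix i assume "i < length (map (\<lambda>i. real (w i) / real D) [0..<n])"
  then have i: "i < n" by simp
  then have "(\<Sum>j | j < i \<and> f j = f i. map (\<lambda>i. real (w i) / real D) [0..<n] ! j)
      = real (\<Sum>j | j < i \<and> f j = f i. w j) / real D"
    by (simp add: sum_divide_distrib)
  also have "\<dots> < 1"
  proof -
    have "(\<Sum>j | j < i \<and> f j = f i. w j) < D" using assms i by blast
    then show ?thesis by (simp add: divide_less_eq del: of_nat_sum)
  qed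
  finally show "(\<Sum>j | j < i \<and> f j = f i. map (\<lambda>i. real (w i) / real D) [0..<n] ! j) < 1" .
qed

lemma sum_batch_weights_le:
  fixes w :: "nat \<Rightarrow> nat"
  assumes "finite A" and "\<forall>j\<in>A. j div M \<le> L"
    and "\<And>t. t \<le> L \<Longrightarrow> card {j \<in> A. j div M = t} \<le> c t"
  shows "(\<Sum>j\<in>A. w (j div M)) \<le> (\<Sum>t\<le>L. c t * w t)"
proof -
  have "(\<Sum>j\<in>A. w (j div M)) = (\<Sum>t\<le>L. \<Sum>j | j \<in> A \<and> j div M = t. w (j div M))"
    using assms(1,2) by (intro sum.group[symmetric]) auto
  also have "\<dots> = (\<Sum>t\<le>L. card {j \<in> A. j div M = t} * w t)"
    by (intro sum.cong refl) simp
  also have "\<dots> \<le> (\<Sum>t\<le>L. c t * w t)"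
    using assms(3) by (intro sum_mono mult_le_mono1) simp
  finally show ?thesis .
qed

lemma card_same_bin_in_batch_le:
  fixes f :: "nat \<Rightarrow> 'b" and i t M :: nat
  assumes "M > 0"
  defines "P \<equiv> {p. p < M \<and> f (t * M + p) = f i}"
  shows "card {j. j < i \<and> f j = f i \<and> j div M = t} \<le> card P"
    and "i div M \<le> t \<Longrightarrow> card {j. j < i \<and> f j = f i \<and> j div M = t} \<le> card P - 1"
proof -
  let ?S = "{j. j < i \<and> f j = f i \<and> j div M = t}"
  have batch_decomp: "j = t * M + j mod M" if "j div M = t" for j
    using that div_mult_mod_eq[of j M] by simp
  have S_sub: "?S \<subseteq> (\<lambda>p. t * M + p) ` (P - {p. t * M + p = i})"
  proof
    fix j assume j: "j \<in> ?S"
    then have j_eq: "j = t * M + j mod M" using batch_decomp by blast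
    then have "j mod M \<in> P - {p. t * M + p = i}"
      using j assms(1) unfolding P_def by auto
    with j_eq show "j \<in> (\<lambda>p. t * M + p) ` (P - {p. t * M + p = i})" by blast
  qed
  have fin: "finite P" unfolding P_def by simp
  have "card ?S \<le> card (P - {p. t * M + p = i})"
    using S_sub fin by (meson card_image_le card_mono finite_Diff finite_imageI le_trans)
  then show "card ?S \<le> card P"
    using fin by (meson card_mono Diff_subset le_trans)
  show "card ?S \<le> card P - 1" if "i div M \<le> t"
  proof (cases "t = i div M")
    case True
    then have "i = t * M + i mod M" using batch_decomp by simp
    then have "P - {p. t * M + p = i} = P - {i mod M}" by auto
    moreover have "i mod M \<in> P"
      using \<open>i = t * M + i mod M\<close> assms(1) unfolding P_def by simp
    ultimately show ?thesis using \<open>card ?S \<le> card (P - _)\<close> fin by simp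
  next
    case False
    have "j div M \<le> i div M" if "j < i" for j
      using that by (simp add: div_le_mono)
    then have "?S = {}" using False \<open>i div M \<le> t\<close> by fastforce
    then show ?thesis by (metis card.empty le0)
  qed
qed

(* Position p of a batch cut into blocks of R consecutive items: block G goes to the bins
   7G, ..., 7G + 6, the first six of which receive c consecutive items each and the last one
   the remaining R - 6c. *)
definition block_bin :: "nat \<Rightarrow> nat \<Rightarrow> nat \<Rightarrow> nat" where
  "block_bin R c p = 7 * (p div R) + min 6 (p mod R div c)"

lemma block_bin_less:
  assumes "p < g * R"
  shows "block_bin R c p < 7 * g"
proof -
  have "p div R < g"
    using assms by (simp add: less_mult_imp_div_less)
  then show ?thesis unfolding block_bin_def by linarith
qed

lemma card_block_slot_le:
  assumes "0 < c"
  shows "card {r. r < R \<and> min 6 (r div c) = l} \<le> (if l < 6 then c else R - 6 * c)"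
proof -
  have "{r. r < R \<and> min 6 (r div c) = l} \<subseteq> (if l < 6 then {l * c..<l * c + c} else {6 * c..<R})"
  proof
    fix r assume r: "r \<in> {r. r < R \<and> min 6 (r div c) = l}"
    have "l * c \<le> r \<and> r < l * c + c" if "r div c = l"
      using that assms by (metis add.commute div_times_less_eq_dividend dividend_less_div_times)
    moreover have "6 * c \<le> r" if "6 \<le> r div c"
      using that assms by (simp add: less_eq_div_iff_mult_less_eq)
    ultimately show "r \<in> (if l < 6 then {l * c..<l * c + c} else {6 * c..<R})"
      using r by (auto split: if_splits)
  qed
  from card_mono[OF _ this] show ?thesis
    by (cases "l < 6") simp_all
qed

lemma card_block_bin_le:
  assumes "0 < c" and "0 < R"
  shows "card {p. p < M \<and> block_bin R c p = b} \<le> (if b mod 7 < 6 then c else R - 6 * c)"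
proof -
  let ?slot = "{r. r < R \<and> min 6 (r div c) = b mod 7}"
  have "{p. p < M \<and> block_bin R c p = b} \<subseteq> (\<lambda>r. b div 7 * R + r) ` ?slot"
  proof
    fix p assume "p \<in> {p. p < M \<and> block_bin R c p = b}"
    then have "b = 7 * (p div R) + min 6 (p mod R div c)" unfolding block_bin_def by simp
    then have "b div 7 = p div R" and "b mod 7 = min 6 (p mod R div c)" by simp_all
    then show "p \<in> (\<lambda>r. b div 7 * R + r) ` ?slot"
      using assms(2) by (intro image_eqI[of _ _ "p mod R"]) simp_all
  qed
  then have "card {p. p < M \<and> block_bin R c p = b} \<le> card ((\<lambda>r. b div 7 * R + r) ` ?slot)"
    by (intro card_mono) simp_all
  also have "\<dots> \<le> card ?slot"
    by (intro card_image_le) simp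
  also have "\<dots> \<le> (if b mod 7 < 6 then c else R - 6 * c)"
    using card_block_slot_le[OF assms(1)] .
  finally show ?thesis .
qed

lemma staircase_load_less:
  fixes K L l :: nat
  assumes "0 < K"
  shows "(\<Sum>t\<le>L. (if t < L then (if l < 6 then 6 * K else 6 * K + 6)
                    else (if l < 6 then 6 * K + 1 else 6 * K) - 1) * 7 ^ t) < 7 * K * (7::nat) ^ L"
    (is "(\<Sum>t\<le>L. (if t < L then ?a else ?b) * _) < _")
proof -
  define s :: nat where "s = (\<Sum>t<L. 7 ^ t)"
  have geometric: "6 * s + 1 = 7 ^ L"
    unfolding s_def by (induction L) auto
  then have K_s: "6 * (K * s) + K = K * 7 ^ L"
    by (metis add_mult_distrib2 mult.left_commute mult_1_right)
  have "(\<Sum>t\<le>L. (if t < L then ?a else ?b) * 7 ^ t) = ?a * s + ?b * 7 ^ L"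
  proof -
    have "(\<Sum>t<L. (if t < L then ?a else ?b) * 7 ^ t) = ?a * s"
      unfolding s_def sum_distrib_left by (intro sum.cong) auto
    then show ?thesis
      by (simp add: lessThan_Suc_atMost[symmetric])
  qed
  also have "\<dots> < 7 * K * 7 ^ L"
  proof (cases "l < 6")
    case True
    then show ?thesis using geometric assms by (simp add: algebra_simps)
  next
    case False
    have "(6 * K + 6) * s = 6 * (K * s) + 6 * s"
      and "(6 * K - 1) * 7 ^ L = 6 * (K * 7 ^ L) - 7 ^ L"
      and "7 ^ L \<le> K * (7::nat) ^ L"
      using assms by (simp_all add: algebra_simps diff_mult_distrib)
    then show ?thesis using False K_s geometric by simp
  qed
  finally show ?thesis .
qed

definition staircase_packing :: "nat \<Rightarrow> nat \<Rightarrow> nat \<Rightarrow> nat \<Rightarrow> nat" where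
  "staircase_packing M L K i =
     block_bin (42 * K + 6) (if i div M < L then 6 * K else 6 * K + 1) (i mod M)"

lemma staircase_bin_weight_less:
  assumes "0 < K" and "i < (L + 1) * M"
  defines "f \<equiv> staircase_packing M L K"
  shows "(\<Sum>j | j < i \<and> f j = f i. (7::nat) ^ (j div M)) < 7 * K * 7 ^ L"
proof -
  have "0 < M" using assms(2) by (cases M) simp_all
  let ?l = "f i mod 7"
  define cap where "cap t = (if t < L then 6 * K else 6 * K + 1)" for t
  \<comment> \<open>In batch L one item fewer: either i itself lies in it, or i precedes all of it.\<close>
  define c where "c t = (if t < L then (if ?l < 6 then 6 * K else 6 * K + 6)
                         else (if ?l < 6 then 6 * K + 1 else 6 * K) - 1)" for t
  have batch_load: "card {p. p < M \<and> f (t * M + p) = f i}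
      \<le> (if ?l < 6 then cap t else 42 * K + 6 - 6 * cap t)" for t
  proof -
    have "{p. p < M \<and> f (t * M + p) = f i} = {p. p < M \<and> block_bin (42 * K + 6) (cap t) p = f i}"
      unfolding f_def staircase_packing_def cap_def by (rule Collect_cong) auto
    also have "card \<dots> \<le> (if ?l < 6 then cap t else 42 * K + 6 - 6 * cap t)"
      using assms(1) by (intro card_block_bin_le) (simp_all add: cap_def)
    finally show ?thesis .
  qed
  have "card {j \<in> {j. j < i \<and> f j = f i}. j div M = t} \<le> c t" if "t \<le> L" for t
  proof (cases "t < L")
    case True
    then show ?thesis
      using le_trans[OF card_same_bin_in_batch_le(1)[OF \<open>0 < M\<close>] batch_load[of t]]
      unfolding c_def cap_def by (simp split: if_splits)
  next
    case False
    moreover have "i div M < L + 1"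
      using assms(2) by (rule less_mult_imp_div_less)
    ultimately have "i div M \<le> t" using that by linarith
    then show ?thesis
      using le_trans[OF card_same_bin_in_batch_le(2)[OF \<open>0 < M\<close>] diff_le_mono[OF batch_load[of t]]]
      unfolding c_def cap_def by (simp split: if_splits)
  qed
  moreover have "j div M \<le> L" if "j < i" for j
    using less_mult_imp_div_less[of j "L + 1" M] that assms(2) by simp
  ultimately have "(\<Sum>j | j < i \<and> f j = f i. (7::nat) ^ (j div M)) \<le> (\<Sum>t\<le>L. c t * 7 ^ t)"
    by (intro sum_batch_weights_le) auto
  also have "\<dots> < 7 * K * 7 ^ L"
    unfolding c_def using staircase_load_less[OF assms(1)] .
  finally show ?thesis .
qed

lemma staircase_packing_less:
  assumes "M = g * (42 * K + 6)" and "i < (L + 1) * M"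
  shows "staircase_packing M L K i < 7 * g"
proof -
  have "0 < M" using assms(2) by (cases M) simp_all
  then have "i mod M < g * (42 * K + 6)" using assms(1) by simp
  then show ?thesis unfolding staircase_packing_def by (rule block_bin_less)
qed

lemma OPT_inst_le:
  assumes "1 \<le> k" and "k \<le> N" and "6 * (7 ^ k + 1) dvd M"
  shows "OPT (inst N M k) * (6 * (7 ^ k + 1)) \<le> 7 * M"
proof -
  define K :: nat where "K = 7 ^ (k - 1)"
  define L where "L = N - k"
  let ?f = "staircase_packing M L K"
  have "0 < K" by (simp add: K_def)
  have pow_k: "7 ^ k = 7 * K"
    using assms(1) unfolding K_def by (cases k) simp_all
  have pow_N: "7 ^ N = 7 * K * 7 ^ L"
    using assms(2) pow_k unfolding L_def by (metis le_add_diff_inverse power_add)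
  have "42 * K + 6 dvd M"
    using assms(3) pow_k by (simp add: add.commute)
  then obtain g where M_eq: "M = g * (42 * K + 6)"
    by (metis dvd_div_mult_self)
  have inst_eq: "inst N M k = map (\<lambda>i. real (7 ^ (i div M)) / real (7 ^ N)) [0..<(L + 1) * M]"
    unfolding inst_eq_map L_def by simp
  have "oe_packing (inst N M k) ?f"
    unfolding inst_eq pow_N using staircase_bin_weight_less[OF \<open>0 < K\<close>]
    by (intro oe_packing_of_nat_weights) blast
  moreover have "\<forall>i < length (inst N M k). ?f i < 7 * g"
    using staircase_packing_less[OF M_eq] by (simp add: inst_eq)
  ultimately have "OPT (inst N M k) \<le> 7 * g"
    by (rule OPT_le)
  then have "OPT (inst N M k) * (42 * K + 6) \<le> 7 * M"
    unfolding M_eq by (metis mult.assoc mult_le_mono1)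
  moreover have "6 * (7 ^ k + 1) = 42 * K + 6"
    using pow_k by simp
  ultimately show ?thesis
    by (simp only:)
qed

theorem mainTheorem10:
  fixes M N k :: nat
  assumes "M \<ge> 3" and "N \<ge> 3" and "fact (7 ^ (N + 1)) dvd M"
    and "1 \<le> k" and "k \<le> N"
  shows "real (OPT (inst N M k)) \<le> 7 * real M / (6 * (7 ^ k + 1))"
proof -
  have "7 \<le> (7::nat) ^ k"
    using power_increasing[of 1 k "7::nat"] assms(4) by simp
  then have "6 * (7 ^ k + 1) \<le> (7::nat) ^ (k + 1)"
    by simp
  also have "\<dots> \<le> 7 ^ (N + 1)"
    using assms(5) by (intro power_increasing) simp_all
  finally have "6 * (7 ^ k + 1) \<le> (7::nat) ^ (N + 1)" .
  then have "(6 * (7 ^ k + 1) :: nat) dvd fact (7 ^ (N + 1))"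
    by (intro dvd_fact) simp_all
  then have "6 * (7 ^ k + 1) dvd M"
    using assms(3) by (rule dvd_trans)
  then have "OPT (inst N M k) * (6 * (7 ^ k + 1)) \<le> 7 * M"
    using assms(4,5) by (intro OPT_inst_le)
  then have "real (OPT (inst N M k) * (6 * (7 ^ k + 1))) \<le> real (7 * M)"
    by (rule of_nat_mono)
  then have "real (OPT (inst N M k)) * (6 * (7 ^ k + 1)) \<le> 7 * real M"
    by (simp add: add.commute)
  then show ?thesis
    by (simp add: pos_le_divide_eq add_pos_pos)
qed

end
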